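(* In $\mathbb{R}^2\otimes\mathbb{R}^2\otimes\mathbb{R}^2$ with standard orthonormal basis $e_1,e_2$ of $\mathbb{R}^2$, for $t\in\mathbb{R}$ let $f_t=e_2\otimes e_1\otimes e_1+e_1\otimes e_2\otimes e_1+e_1\otimes e_1\otimes e_2+t\,e_2\otimes e_2\otimes e_2$. Then (1) $\|f_t\|_\sigma=|t|$ if $t\ge2$ or $t\le-1$, and $\|f_t\|_\sigma=\frac{2}{\sqrt{3-t}}$ if $-1\le t\le2$; (2) $\|f_t\|_\star=3-t$ if $t\le\frac13$, and $\|f_t\|_\star=\frac{(1+t)^{3/2}}{\sqrt t}$ if $t\ge\frac13$.
   Context: The tensor space carries the inner product induced from the standard one, with euclidean norm $\|\cdot\|_2$. A simple tensor is one of the form $v_1\otimes v_2\otimes v_3$. The spectral norm is $\|T\|_\sigma=\max\{|\langle T,v\rangle|: v \text{ simple},\ \|v\|_2=1\}$. The nuclear norm $\|T\|_\star$ is the minimum of $\sum_{i=1}^r\|v_i\|_2$ over all expressions $T=v_1+\cdots+v_r$ with $v_i$ simple tensors. *)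

theory Defs
  imports "HOL-Analysis.Analysis"
begin

text \<open>Tensors in R^2 (x) R^2 (x) R^2 are represented as elements of real^2^2^2;
  the library inner product on this type is exactly the induced (Frobenius) one,
  and norm is the euclidean norm.\<close>

type_synonym tensor3 = "real^2^2^2"

definition tprod3 :: "real^2 \<Rightarrow> real^2 \<Rightarrow> real^2 \<Rightarrow> tensor3" where
  "tprod3 a b c = (\<chi> i j k. a$i * b$j * c$k)"

definition simple_tensor :: "tensor3 \<Rightarrow> bool" where
  "simple_tensor v \<longleftrightarrow> (\<exists>a b c. v = tprod3 a b c)"

definition spectral_norm :: "tensor3 \<Rightarrow> real" where
  "spectral_norm T = Sup {\<bar>T \<bullet> v\<bar> | v. simple_tensor v \<and> norm v = 1}"

definition nuclear_norm :: "tensor3 \<Rightarrow> real" where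
  "nuclear_norm T = Inf {(\<Sum>i<r. norm (v i)) | (r::nat) (v::nat \<Rightarrow> tensor3).
      (\<forall>i<r. simple_tensor (v i)) \<and> T = (\<Sum>i<r. v i)}"

definition e1 :: "real^2" where "e1 = axis 0 1"
definition e2 :: "real^2" where "e2 = axis 1 1"

definition ftensor :: "real \<Rightarrow> tensor3" where
  "ftensor t = tprod3 e2 e1 e1 + tprod3 e1 e2 e1 + tprod3 e1 e1 e2 + t *\<^sub>R tprod3 e2 e2 e2"

end

theory Submission
  imports Defs
begin

text \<open>
  Both norms are obtained from one inequality: if \<open>L\<close> bounds the contraction
  \<open>f\<^sub>s(\<cdot>, u, u) = (2 u\<^sub>1 u\<^sub>2, u\<^sub>1\<^sup>2 + s u\<^sub>2\<^sup>2)\<close> by \<open>L \<parallel>u\<parallel>\<^sup>2\<close>, then polarization in the last two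
  (symmetric) slots gives \<open>|\<langle>f\<^sub>s, a \<otimes> b \<otimes> c\<rangle>| \<le> L \<parallel>a\<parallel> \<parallel>b\<parallel> \<parallel>c\<parallel>\<close>.  For \<open>s = t\<close> and the sharp \<open>L\<close>
  this is the upper bound on \<open>\<parallel>f\<^sub>t\<parallel>\<^sub>\<sigma>\<close>, attained on a simple tensor \<open>u \<otimes> u \<otimes> u\<close>; by duality
  \<open>\<langle>f\<^sub>t, f\<^sub>s\<rangle> = 3 + ts \<le> L \<parallel>f\<^sub>t\<parallel>\<^sub>\<star>\<close>, and the choices \<open>s = -1\<close> resp. \<open>s = 2 - 1/t\<close> give lower bounds
  on the nuclear norm that are matched by explicit decompositions into three resp. two
  symmetric rank-one tensors.
\<close>

lemma sum_UNIV_2: "sum f (UNIV::2 set) = f 0 + f 1"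
proof -
  have "(2::2) = 0" by simp
  then show ?thesis using sum_2[of f] by (metis add.commute)
qed

lemma forall_UNIV_2: "(\<forall>i::2. P i) \<longleftrightarrow> P 0 \<and> P 1"
  by (metis exhaust_2 zero_neq_one)

definition vec2 :: "real \<Rightarrow> real \<Rightarrow> real^2" where
  "vec2 x y = (\<chi> i. if i = 0 then x else y)"

lemma vec2_nth [simp]: "vec2 x y $ 0 = x" "vec2 x y $ 1 = y"
  by (simp_all add: vec2_def)

lemma inner_vec2_eq: "(a::real^2) \<bullet> b = a$0 * b$0 + a$1 * b$1"
  by (simp add: inner_vec_def sum_UNIV_2)

lemma norm_vec2_eq: "norm (a::real^2) = sqrt (a$0^2 + a$1^2)"
  by (simp add: norm_eq_sqrt_inner inner_vec2_eq power2_eq_square)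

lemma norm_vec2_power2: "norm (a::real^2) ^ 2 = a$0^2 + a$1^2"
  unfolding power2_norm_eq_inner inner_vec2_eq by (simp add: power2_eq_square)

lemma e1_nth [simp]: "e1 $ 0 = 1" "e1 $ 1 = 0"
  by (simp_all add: e1_def axis_def)

lemma e2_nth [simp]: "e2 $ 0 = 0" "e2 $ 1 = 1"
  by (simp_all add: e2_def axis_def)

lemma tprod3_nth [simp]: "tprod3 a b c $ i $ j $ k = a$i * b$j * c$k"
  by (simp add: tprod3_def)

lemma inner_tprod3: "tprod3 a b c \<bullet> tprod3 a' b' c' = (a \<bullet> a') * (b \<bullet> b') * (c \<bullet> c')"
  by (simp add: inner_vec_def sum_UNIV_2 algebra_simps)

lemma norm_tprod3: "norm (tprod3 a b c) = norm a * norm b * norm c"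
  by (simp add: norm_eq_sqrt_inner inner_tprod3 real_sqrt_mult)

lemma simple_tensor_tprod3 [simp]: "simple_tensor (tprod3 a b c)"
  by (auto simp: simple_tensor_def)

lemma inner_ftensor_tprod3:
  "ftensor s \<bullet> tprod3 a b c = a$1*b$0*c$0 + a$0*b$1*c$0 + a$0*b$0*c$1 + s * a$1*b$1*c$1"
  by (simp add: ftensor_def inner_add_left inner_tprod3 inner_vec2_eq)

lemma inner_ftensor_ftensor: "ftensor t \<bullet> ftensor s = 3 + t * s"
  by (simp add: ftensor_def inner_add inner_tprod3 inner_vec2_eq)

lemma parallelogram_law:
  fixes x y :: "'a::real_inner"
  shows "norm (x + y)^2 + norm (x - y)^2 = 2 * (norm x ^ 2 + norm y ^ 2)"
  by (simp add: power2_norm_eq_inner inner_add inner_diff inner_commute)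

text \<open>With \<open>X = u\<^sub>1\<^sup>2\<close> and \<open>Y = u\<^sub>2\<^sup>2\<close>, \<open>diag_bound s L\<close> says
  \<open>\<parallel>(2 u\<^sub>1 u\<^sub>2, u\<^sub>1\<^sup>2 + s u\<^sub>2\<^sup>2)\<parallel> \<le> L \<parallel>u\<parallel>\<^sup>2\<close>, i.e. \<open>L\<close> bounds \<open>f\<^sub>s\<close> on tensors \<open>a \<otimes> u \<otimes> u\<close>.\<close>

definition diag_bound :: "real \<Rightarrow> real \<Rightarrow> bool" where
  "diag_bound s L \<longleftrightarrow> L \<ge> 0 \<and> (\<forall>X\<ge>0. \<forall>Y\<ge>0. 4*X*Y + (X + s*Y)^2 \<le> L^2 * (X + Y)^2)"

lemma abs_inner_ftensor_diag_le:
  assumes L: "diag_bound s L"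
  shows "\<bar>ftensor s \<bullet> tprod3 a u u\<bar> \<le> L * norm a * norm u ^ 2"
proof -
  define w where "w = vec2 (2 * u$0 * u$1) (u$0^2 + s * u$1^2)"
  have "norm w ^ 2 = 4 * u$0^2 * u$1^2 + (u$0^2 + s * u$1^2)^2"
    unfolding norm_vec2_power2 w_def by (simp add: power_mult_distrib)
  also have "\<dots> \<le> L^2 * (u$0^2 + u$1^2)^2"
    using L unfolding diag_bound_def by (meson zero_le_power2)
  also have "\<dots> = (L * norm u ^ 2)^2"
    by (simp add: norm_vec2_power2 power_mult_distrib)
  finally have "norm w \<le> L * norm u ^ 2"
    by (rule power2_le_imp_le) (use L in \<open>simp add: diag_bound_def\<close>)
  moreover have "ftensor s \<bullet> tprod3 a u u = a \<bullet> w"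
    by (simp add: w_def inner_ftensor_tprod3 inner_vec2_eq power2_eq_square algebra_simps)
  ultimately have "\<bar>a \<bullet> w\<bar> \<le> norm a * (L * norm u ^ 2)"
    using Cauchy_Schwarz_ineq2[of a w] by (meson mult_left_mono norm_ge_zero order_trans)
  then show ?thesis
    using \<open>ftensor s \<bullet> tprod3 a u u = a \<bullet> w\<close> by (simp add: mult.assoc mult.left_commute)
qed

lemma inner_ftensor_polarize:
  "4 * (ftensor s \<bullet> tprod3 a b c) =
     ftensor s \<bullet> tprod3 a (b + c) (b + c) - ftensor s \<bullet> tprod3 a (b - c) (b - c)"
  by (simp add: inner_ftensor_tprod3 algebra_simps)

lemma inner_ftensor_scale:
  "ftensor s \<bullet> tprod3 a (x *\<^sub>R b) (y *\<^sub>R c) = x * y * (ftensor s \<bullet> tprod3 a b c)"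
  by (simp add: inner_ftensor_tprod3 algebra_simps)

lemma abs_inner_ftensor_le:
  assumes L: "diag_bound s L"
  shows "\<bar>ftensor s \<bullet> tprod3 a b c\<bar> \<le> L * norm a * norm b * norm c"
proof (cases "b = 0 \<or> c = 0")
  case True
  then show ?thesis using L by (auto simp: inner_ftensor_tprod3 diag_bound_def)
next
  case False
  define b' where "b' = norm c *\<^sub>R b"
  define c' where "c' = norm b *\<^sub>R c"
  define m where "m = norm b * norm c"
  have m: "m > 0" "norm b' = m" "norm c' = m"
    using False by (auto simp: m_def b'_def c'_def)
  have "4 * m * \<bar>ftensor s \<bullet> tprod3 a b c\<bar> = \<bar>4 * (ftensor s \<bullet> tprod3 a b' c')\<bar>"
    using m by (simp add: b'_def c'_def m_def inner_ftensor_scale abs_mult)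
  also have "\<dots> \<le> L * norm a * norm (b' + c') ^ 2 + L * norm a * norm (b' - c') ^ 2"
    unfolding inner_ftensor_polarize
    using abs_inner_ftensor_diag_le[OF L, of a "b' + c'"] abs_inner_ftensor_diag_le[OF L, of a "b' - c'"]
    by linarith
  also have "\<dots> = L * norm a * (norm (b' + c') ^ 2 + norm (b' - c') ^ 2)"
    by (simp add: distrib_left)
  also have "\<dots> = 4 * m * (L * norm a * m)"
    using parallelogram_law[of b' c'] m by (simp add: power2_eq_square)
  finally have "\<bar>ftensor s \<bullet> tprod3 a b c\<bar> \<le> L * norm a * m"
    using m(1) by (simp add: mult_le_cancel_left_pos)
  then show ?thesis
    by (simp add: m_def mult.assoc)
qed

lemma spectral_norm_eqI:
  assumes bound: "\<And>v. simple_tensor v \<Longrightarrow> \<bar>T \<bullet> v\<bar> \<le> L * norm v"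
    and v: "simple_tensor v" "norm v = 1" "\<bar>T \<bullet> v\<bar> = L"
  shows "spectral_norm T = L"
  unfolding spectral_norm_def
proof (rule cSup_eq_maximum)
  show "L \<in> {\<bar>T \<bullet> v\<bar> |v. simple_tensor v \<and> norm v = 1}"
    using v by blast
qed (use bound in fastforce)

lemma inner_le_sum_norm_simple:
  fixes r :: nat
  assumes bound: "\<And>v. simple_tensor v \<Longrightarrow> \<bar>S \<bullet> v\<bar> \<le> L * norm v"
    and v: "\<forall>i<r. simple_tensor (v i)"
  shows "S \<bullet> (\<Sum>i<r. v i) \<le> L * (\<Sum>i<r. norm (v i))"
proof -
  have "S \<bullet> (\<Sum>i<r. v i) = (\<Sum>i<r. S \<bullet> v i)"
    by (simp add: inner_sum_right)
  also have "\<dots> \<le> (\<Sum>i<r. L * norm (v i))"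
    using bound v by (intro sum_mono) (auto dest: abs_le_D1)
  finally show ?thesis
    by (simp add: sum_distrib_left)
qed

lemma nuclear_norm_eqI:
  assumes lower: "\<And>(r::nat) v. \<forall>i<r. simple_tensor (v i) \<Longrightarrow> T = (\<Sum>i<r. v i) \<Longrightarrow> z \<le> (\<Sum>i<r. norm (v i))"
    and vs: "\<forall>v\<in>set vs. simple_tensor v" "T = sum_list vs" "sum_list (map norm vs) = z"
  shows "nuclear_norm T = z"
  unfolding nuclear_norm_def
proof (rule cInf_eq_minimum)
  define v where "v = (!) vs"
  have "T = (\<Sum>i<length vs. v i)" "z = (\<Sum>i<length vs. norm (v i))"
    using vs by (simp_all add: v_def sum_list_sum_nth atLeast0LessThan)
  moreover have "\<forall>i<length vs. simple_tensor (v i)"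
    using vs(1) by (simp add: v_def)
  ultimately show "z \<in> {\<Sum>i<r. norm (v i) |(r::nat) (v::nat \<Rightarrow> tensor3). (\<forall>i<r. simple_tensor (v i)) \<and> T = (\<Sum>i<r. v i)}"
    by blast
qed (use lower in fastforce)

lemma abs_inner_ftensor_simple_le:
  "diag_bound s L \<Longrightarrow> simple_tensor v \<Longrightarrow> \<bar>ftensor s \<bullet> v\<bar> \<le> L * norm v"
  by (auto simp: simple_tensor_def norm_tprod3 mult.assoc dest: abs_inner_ftensor_le)

lemma nuclear_sum_ftensor_ge:
  fixes r :: nat
  assumes L: "diag_bound s L" and v: "\<forall>i<r. simple_tensor (v i)" "ftensor t = (\<Sum>i<r. v i)"
  shows "3 + t * s \<le> L * (\<Sum>i<r. norm (v i))"
proof -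
  have "3 + t * s = ftensor s \<bullet> (\<Sum>i<r. v i)"
    by (metis v(2) inner_commute inner_ftensor_ftensor)
  also have "\<dots> \<le> L * (\<Sum>i<r. norm (v i))"
    by (rule inner_le_sum_norm_simple[OF abs_inner_ftensor_simple_le[OF L] v(1)])
  finally show ?thesis .
qed

lemma diag_bound_abs:
  assumes "t \<ge> 2 \<or> t \<le> -1"
  shows "diag_bound t \<bar>t\<bar>"
  unfolding diag_bound_def
proof (intro conjI allI impI)
  fix X Y :: real
  assume "X \<ge> 0" "Y \<ge> 0"
  moreover have "(t - 1) * (t + 1) \<ge> 0" "(t - 2) * (t + 1) \<ge> 0"
    using assms by (auto intro: mult_nonneg_nonneg mult_nonpos_nonpos)
  ultimately have "0 \<le> (t - 1) * (t + 1) * X^2 + 2 * ((t - 2) * (t + 1) * (X * Y))"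
    by simp
  also have "\<dots> = \<bar>t\<bar>^2 * (X + Y)^2 - (4*X*Y + (X + t*Y)^2)"
    by (simp add: power2_eq_square algebra_simps)
  finally show "4*X*Y + (X + t*Y)^2 \<le> \<bar>t\<bar>^2 * (X + Y)^2"
    by simp
qed simp

lemma diag_bound_middle:
  assumes t: "-1 \<le> t" "t \<le> 2"
  shows "diag_bound t (2 / sqrt (3 - t))"
  unfolding diag_bound_def
proof (intro conjI allI impI)
  fix X Y :: real
  have "0 \<le> (1 + t) * (X - (2 - t) * Y)^2"
    using t by simp
  also have "\<dots> = 4 * (X + Y)^2 - (3 - t) * (4*X*Y + (X + t*Y)^2)"
    by (simp add: power2_eq_square algebra_simps)
  finally show "4*X*Y + (X + t*Y)^2 \<le> (2 / sqrt (3 - t))^2 * (X + Y)^2"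
    using t by (simp add: power_divide field_simps)
qed (use t in simp)

lemma spectral_norm_ftensor_outer:
  assumes "t \<ge> 2 \<or> t \<le> -1"
  shows "spectral_norm (ftensor t) = \<bar>t\<bar>"
proof (rule spectral_norm_eqI)
  show "simple_tensor (tprod3 e2 e2 e2)" "norm (tprod3 e2 e2 e2) = 1"
    "\<bar>ftensor t \<bullet> tprod3 e2 e2 e2\<bar> = \<bar>t\<bar>"
    by (simp_all add: norm_tprod3 norm_vec2_eq inner_ftensor_tprod3)
qed (rule abs_inner_ftensor_simple_le[OF diag_bound_abs[OF assms]])

lemma spectral_norm_ftensor_middle:
  assumes t: "-1 \<le> t" "t \<le> 2"
  shows "spectral_norm (ftensor t) = 2 / sqrt (3 - t)"
proof (rule spectral_norm_eqI)
  define p where "p = sqrt (1 / (3 - t))"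
  define u where "u = vec2 (sqrt ((2 - t) / (3 - t))) p"
  have p2: "p^2 = 1 / (3 - t)"
    using t by (simp add: p_def)
  have u0: "u$0^2 = (2 - t) / (3 - t)"
    using t by (simp add: u_def)
  have "norm u ^ 2 = 1"
    using t by (simp add: norm_vec2_power2 u0 p2 u_def field_simps)
  then have "norm u = 1"
    using norm_ge_zero[of u] by (auto simp: power2_eq_1_iff)
  then show "norm (tprod3 u u u) = 1"
    by (simp add: norm_tprod3)
  have "ftensor t \<bullet> tprod3 u u u = p * (3 * u$0^2 + t * p^2)"
    by (simp add: inner_ftensor_tprod3 u_def power2_eq_square algebra_simps)
  also have "3 * u$0^2 + t * p^2 = 2"
    using t by (simp add: u0 p2 divide_simps)
  finally show "\<bar>ftensor t \<bullet> tprod3 u u u\<bar> = 2 / sqrt (3 - t)"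
    using t by (simp add: p_def real_sqrt_divide)
  show "\<And>v. simple_tensor v \<Longrightarrow> \<bar>ftensor t \<bullet> v\<bar> \<le> 2 / sqrt (3 - t) * norm v"
    by (rule abs_inner_ftensor_simple_le[OF diag_bound_middle[OF t]])
qed simp

lemma powr_three_halves: "x > 0 \<Longrightarrow> x powr (3/2) = x * sqrt (x::real)"
  using powr_add[of x 1 "1/2"] by (simp add: powr_half_sqrt)

lemma nuclear_norm_ftensor_le_third:
  assumes t: "t \<le> 1/3"
  shows "nuclear_norm (ftensor t) = 3 - t"
proof (rule nuclear_norm_eqI)
  fix r :: nat and v
  assume "\<forall>i<r. simple_tensor (v i)" "ftensor t = (\<Sum>i<r. v i)"
  then show "3 - t \<le> (\<Sum>i<r. norm (v i))"
    using nuclear_sum_ftensor_ge[OF diag_bound_abs, of "-1"] by simp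
next
  define h where "h = sqrt 3 / 2"
  have h2: "h * h = 3/4"
    by (simp add: h_def)
  define uA uB uC where "uA = vec2 h (1/2)" and "uB = vec2 (-h) (1/2)" and "uC = vec2 0 (-1)"
  have "norm uA = 1" "norm uB = 1" "norm uC = 1"
    using h2 by (simp_all add: uA_def uB_def uC_def norm_vec2_eq power2_eq_square)
  define vs where "vs = [tprod3 ((4/3) *\<^sub>R uA) uA uA, tprod3 ((4/3) *\<^sub>R uB) uB uB,
                        tprod3 ((1/3 - t) *\<^sub>R uC) uC uC]"
  show "\<forall>v\<in>set vs. simple_tensor v"
    by (simp add: vs_def)
  show "ftensor t = sum_list vs"
    by (simp add: vs_def uA_def uB_def uC_def vec_eq_iff forall_UNIV_2 ftensor_def h2 algebra_simps)
  show "sum_list (map norm vs) = 3 - t"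
    using t \<open>norm uA = 1\<close> \<open>norm uB = 1\<close> \<open>norm uC = 1\<close> by (simp add: vs_def norm_tprod3)
qed

lemma nuclear_norm_ftensor_ge_third:
  assumes t: "t \<ge> 1/3"
  shows "nuclear_norm (ftensor t) = (1 + t) powr (3/2) / sqrt t"
proof (rule nuclear_norm_eqI)
  define s where "s = 2 - 1 / t"
  have s: "-1 \<le> s" "s \<le> 2" "3 - s = (1 + t) / t" "3 + t * s = 2 * (1 + t)"
    using t by (simp_all add: s_def field_simps)
  define L where "L = 2 / sqrt (3 - s)"
  have L: "L > 0"
    using s by (simp add: L_def)
  have target: "(1 + t) powr (3/2) / sqrt t = 2 * (1 + t) / L"
    using t by (simp add: L_def s powr_three_halves real_sqrt_divide field_simps)
  fix r :: nat and v
  assume "\<forall>i<r. simple_tensor (v i)" "ftensor t = (\<Sum>i<r. v i)"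
  then have "3 + t * s \<le> L * (\<Sum>i<r. norm (v i))"
    unfolding L_def by (intro nuclear_sum_ftensor_ge[OF diag_bound_middle[OF s(1,2)]])
  then show "(1 + t) powr (3/2) / sqrt t \<le> (\<Sum>i<r. norm (v i))"
    unfolding target pos_divide_le_eq[OF L] s(4) by (simp add: mult.commute)
next
  define r where "r = sqrt t"
  have r: "r > 0" "r * r = t"
    using t by (simp_all add: r_def)
  define uP uM where "uP = vec2 1 r" and "uM = vec2 (-1) r"
  have "norm uP = sqrt (1 + t)" "norm uM = sqrt (1 + t)"
    using r by (simp_all add: uP_def uM_def norm_vec2_eq power2_eq_square)
  define vs where "vs = [tprod3 ((1 / (2 * r)) *\<^sub>R uP) uP uP, tprod3 ((1 / (2 * r)) *\<^sub>R uM) uM uM]"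
  show "\<forall>v\<in>set vs. simple_tensor v"
    by (simp add: vs_def)
  show "ftensor t = sum_list vs"
    using r by (simp add: vs_def uP_def uM_def vec_eq_iff forall_UNIV_2 ftensor_def field_simps)
  have "sqrt (1 + t) ^ 3 = (1 + t) powr (3/2)"
    using t by (simp add: powr_three_halves power3_eq_cube)
  then show "sum_list (map norm vs) = (1 + t) powr (3/2) / sqrt t"
    using r \<open>norm uP = sqrt (1 + t)\<close> \<open>norm uM = sqrt (1 + t)\<close>
    by (simp add: vs_def norm_tprod3 r_def power3_eq_cube)
qed

theorem mainTheorem19:
  fixes t :: real
  shows "((t \<ge> 2 \<or> t \<le> -1) \<longrightarrow> spectral_norm (ftensor t) = \<bar>t\<bar>)
       \<and> ((-1 \<le> t \<and> t \<le> 2) \<longrightarrow> spectral_norm (ftensor t) = 2 / sqrt (3 - t))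
       \<and> (t \<le> 1/3 \<longrightarrow> nuclear_norm (ftensor t) = 3 - t)
       \<and> (t \<ge> 1/3 \<longrightarrow> nuclear_norm (ftensor t) = (1 + t) powr (3/2) / sqrt t)"
  using spectral_norm_ftensor_outer spectral_norm_ftensor_middle
    nuclear_norm_ftensor_le_third nuclear_norm_ftensor_ge_third by blast

end
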